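(* Let $T$ be a near-truss and $P$ a non-empty normal sub-heap of $T$. Then $P$ is a paragon if and only if $P$ is left-closed and all equivalence classes of the sub-heap relation $\sim_P$ are right-closed. In particular, if $T$ is a skew truss, then $P$ is a paragon if and only if $P$ is a closed normal sub-heap.
   Context: A heap is a set with a ternary operation $[-,-,-]$ satisfying $[a_1,a_2,[a_3,a_4,a_5]]=[[a_1,a_2,a_3],a_4,a_5]$ and $[a,a,b]=b=[b,a,a]$. A normal sub-heap is a non-empty subset $S$ closed under $[-,-,-]$ with $[[a,e,s],a,e]\in S$ for all $a$ and $e,s\in S$; $a\sim_S b$ iff $[a,b,s]\in S$ for some (equivalently all) $s\in S$. A pre-truss is a heap with an associative multiplication; a near-truss satisfies $a[b,c,d]=[ab,ac,ad]$; a skew truss is a near-truss also satisfying $[b,c,d]a=[ba,ca,da]$. A sub-heap $S$ is left-closed if $[ts',ts,s]\in S$ for all $s,s'\in S$, $t\in T$, right-closed if $[s't,st,s]\in S$, closed if both. A paragon is a non-empty normal sub-heap $P$ such that every equivalence class of $\sim_P$ is a closed sub-heap. *)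

theory Defs
  imports Main
begin

(* A heap (and truss) is modelled on the whole type 'a: h is the ternary
   heap operation [-,-,-], m the multiplication. *)

definition heap :: "('a \<Rightarrow> 'a \<Rightarrow> 'a \<Rightarrow> 'a) \<Rightarrow> bool" where
  "heap h \<longleftrightarrow>
     (\<forall>a1 a2 a3 a4 a5. h a1 a2 (h a3 a4 a5) = h (h a1 a2 a3) a4 a5) \<and>
     (\<forall>a b. h a a b = b \<and> h b a a = b)"

definition pre_truss :: "('a \<Rightarrow> 'a \<Rightarrow> 'a \<Rightarrow> 'a) \<Rightarrow> ('a \<Rightarrow> 'a \<Rightarrow> 'a) \<Rightarrow> bool" where
  "pre_truss h m \<longleftrightarrow> heap h \<and> (\<forall>a b c. m (m a b) c = m a (m b c))"

definition near_truss :: "('a \<Rightarrow> 'a \<Rightarrow> 'a \<Rightarrow> 'a) \<Rightarrow> ('a \<Rightarrow> 'a \<Rightarrow> 'a) \<Rightarrow> bool" where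
  "near_truss h m \<longleftrightarrow> pre_truss h m \<and>
     (\<forall>a b c d. m a (h b c d) = h (m a b) (m a c) (m a d))"

definition skew_truss :: "('a \<Rightarrow> 'a \<Rightarrow> 'a \<Rightarrow> 'a) \<Rightarrow> ('a \<Rightarrow> 'a \<Rightarrow> 'a) \<Rightarrow> bool" where
  "skew_truss h m \<longleftrightarrow> near_truss h m \<and>
     (\<forall>a b c d. m (h b c d) a = h (m b a) (m c a) (m d a))"

definition sub_heap :: "('a \<Rightarrow> 'a \<Rightarrow> 'a \<Rightarrow> 'a) \<Rightarrow> 'a set \<Rightarrow> bool" where
  "sub_heap h S \<longleftrightarrow> (\<forall>a\<in>S. \<forall>b\<in>S. \<forall>c\<in>S. h a b c \<in> S)"

definition normal_sub_heap :: "('a \<Rightarrow> 'a \<Rightarrow> 'a \<Rightarrow> 'a) \<Rightarrow> 'a set \<Rightarrow> bool" where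
  "normal_sub_heap h S \<longleftrightarrow> S \<noteq> {} \<and> sub_heap h S \<and>
     (\<forall>a. \<forall>e\<in>S. \<forall>s\<in>S. h (h a e s) a e \<in> S)"

definition sim :: "('a \<Rightarrow> 'a \<Rightarrow> 'a \<Rightarrow> 'a) \<Rightarrow> 'a set \<Rightarrow> 'a \<Rightarrow> 'a \<Rightarrow> bool" where
  "sim h S a b \<longleftrightarrow> (\<exists>s\<in>S. h a b s \<in> S)"

definition left_closed :: "('a \<Rightarrow> 'a \<Rightarrow> 'a \<Rightarrow> 'a) \<Rightarrow> ('a \<Rightarrow> 'a \<Rightarrow> 'a) \<Rightarrow> 'a set \<Rightarrow> bool" where
  "left_closed h m S \<longleftrightarrow> (\<forall>s\<in>S. \<forall>s'\<in>S. \<forall>t. h (m t s') (m t s) s \<in> S)"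

definition right_closed :: "('a \<Rightarrow> 'a \<Rightarrow> 'a \<Rightarrow> 'a) \<Rightarrow> ('a \<Rightarrow> 'a \<Rightarrow> 'a) \<Rightarrow> 'a set \<Rightarrow> bool" where
  "right_closed h m S \<longleftrightarrow> (\<forall>s\<in>S. \<forall>s'\<in>S. \<forall>t. h (m s' t) (m s t) s \<in> S)"

definition closed_sub :: "('a \<Rightarrow> 'a \<Rightarrow> 'a \<Rightarrow> 'a) \<Rightarrow> ('a \<Rightarrow> 'a \<Rightarrow> 'a) \<Rightarrow> 'a set \<Rightarrow> bool" where
  "closed_sub h m S \<longleftrightarrow> left_closed h m S \<and> right_closed h m S"

definition sim_class :: "('a \<Rightarrow> 'a \<Rightarrow> 'a \<Rightarrow> 'a) \<Rightarrow> 'a set \<Rightarrow> 'a \<Rightarrow> 'a set" where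
  "sim_class h P a = {b. sim h P a b}"

definition paragon :: "('a \<Rightarrow> 'a \<Rightarrow> 'a \<Rightarrow> 'a) \<Rightarrow> ('a \<Rightarrow> 'a \<Rightarrow> 'a) \<Rightarrow> 'a set \<Rightarrow> bool" where
  "paragon h m P \<longleftrightarrow> normal_sub_heap h P \<and>
     (\<forall>a. sub_heap h (sim_class h P a) \<and> closed_sub h m (sim_class h P a))"

end

theory Submission
  imports Defs
begin

text \<open>Fix a base point \<open>e \<in> P\<close>. Then \<open>a \<sim>\<^sub>P b\<close> iff \<open>[a,b,e] \<in> P\<close>, and the class of \<open>e\<close> is
  \<open>P\<close> itself; hence a paragon must be closed, in particular left-closed. Conversely, for
  \<open>s, s'\<close> in one class write \<open>s' = [q,e,s]\<close> with \<open>q \<in> P\<close>; left distributivity turns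
  \<open>[ts',ts,s]\<close> into \<open>[tq,te,s]\<close>, which is \<open>\<sim>\<^sub>P\<close>-equivalent to \<open>s\<close> because
  \<open>[tq,te,e] \<in> P\<close> by left-closedness of \<open>P\<close>. So left-closedness of \<open>P\<close> propagates to
  every class, and in a skew truss the mirror argument does the same on the right.\<close>

lemma right_closed_eq_left_closed_flip:
  "right_closed h m S \<longleftrightarrow> left_closed h (\<lambda>x y. m y x) S"
  by (simp add: right_closed_def left_closed_def)

context
  fixes h :: "'a \<Rightarrow> 'a \<Rightarrow> 'a \<Rightarrow> 'a"
  assumes heap: "heap h"
begin

lemma heap_assoc: "h a b (h c d f) = h (h a b c) d f"
  using heap by (simp add: heap_def)

lemma heap_cancel_left [simp]: "h a a b = b"
  and heap_cancel_right [simp]: "h b a a = b"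
  using heap by (simp_all add: heap_def)

lemma heap_assoc_middle: "h a (h d c b) f = h (h a b c) d f"
proof -
  have "h a (h d c b) f = h a (h d c b) (h (h (h d c b) b c) d f)"
    by (simp add: heap_assoc[symmetric])
  also have "\<dots> = h (h a (h d c b) (h (h d c b) b c)) d f"
    by (rule heap_assoc)
  also have "h a (h d c b) (h (h d c b) b c) = h a b c"
    by (simp add: heap_assoc)
  finally show ?thesis .
qed

context
  fixes P :: "'a set" and e :: 'a
  assumes sub_heap: "sub_heap h P" and base: "e \<in> P"
begin

lemma sub_heap_closed: "x \<in> P \<Longrightarrow> y \<in> P \<Longrightarrow> z \<in> P \<Longrightarrow> h x y z \<in> P"
  using sub_heap by (simp add: sub_heap_def)

lemma sim_iff_base: "sim h P a b \<longleftrightarrow> h a b e \<in> P"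
proof
  assume "sim h P a b"
  then obtain s where "s \<in> P" "h a b s \<in> P"
    by (auto simp: sim_def)
  moreover have "h a b e = h (h a b s) s e"
    by (simp add: heap_assoc[symmetric])
  ultimately show "h a b e \<in> P"
    using base sub_heap_closed by simp
qed (use base in \<open>auto simp: sim_def\<close>)

lemma sim_class_eq: "sim_class h P a = {b. h a b e \<in> P}"
  by (simp add: sim_class_def sim_iff_base)

lemma sim_base_sym: "h a b e \<in> P \<Longrightarrow> h b a e \<in> P"
  using sub_heap_closed[OF base _ base, of "h a b e"]
  by (simp add: heap_assoc_middle)

lemma sim_base_trans:
  assumes "h a b e \<in> P" and "h b c e \<in> P"
  shows "h a c e \<in> P"
proof -
  have "h (h a b e) e (h b c e) = h a c e"
    by (simp add: heap_assoc[symmetric]) (simp add: heap_assoc)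
  then show ?thesis
    using sub_heap_closed[OF assms(1) base assms(2)] by simp
qed

lemma sim_class_base: "sim_class h P e = P"
proof -
  have "h e b e \<in> P \<longleftrightarrow> b \<in> P" for b
    using sub_heap_closed[OF base _ base, of "h e b e"] sub_heap_closed[OF base _ base, of b]
    by (auto simp: heap_assoc_middle)
  then show ?thesis
    by (auto simp: sim_class_eq)
qed

lemma sub_heap_sim_class: "sub_heap h (sim_class h P a)"
proof -
  have split: "h a (h b c d) e = h (h a d e) (h a c e) (h a b e)" for b c d
  proof -
    have "h (h a d e) (h a c e) (h a b e) = h a d (h e (h a c e) (h a b e))"
      by (simp add: heap_assoc)
    also have "h e (h a c e) (h a b e) = h c b e"
      by (simp add: heap_assoc_middle heap_assoc)
    finally show ?thesis
      by (simp add: heap_assoc heap_assoc_middle)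
  qed
  show ?thesis
    unfolding sub_heap_def sim_class_eq mem_Collect_eq split by (blast intro: sub_heap_closed)
qed

lemma left_closed_sim_class:
  assumes left_distrib: "\<And>a b c d. m a (h b c d) = h (m a b) (m a c) (m a d)"
    and left_closed: "left_closed h m P"
  shows "left_closed h m (sim_class h P a)"
  unfolding left_closed_def sim_class_eq
proof (intro ballI allI, simp)
  fix s s' t
  assume s: "h a s e \<in> P" and s': "h a s' e \<in> P"
  define q where "q = h s' s e"
  have "q \<in> P"
    unfolding q_def using sim_base_trans[OF sim_base_sym[OF s'] s] .
  have "m t s' = h (m t q) (m t e) (m t s)"
    by (simp add: q_def heap_assoc[symmetric] left_distrib[symmetric])
  then have "h (h (m t s') (m t s) s) s e = h (m t q) (m t e) e"
    by (simp add: heap_assoc[symmetric])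
  also have "\<dots> \<in> P"
    using left_closed \<open>q \<in> P\<close> base by (simp add: left_closed_def)
  finally show "h a (h (m t s') (m t s) s) e \<in> P"
    using sim_base_trans[OF s sim_base_sym] by blast
qed

lemma right_closed_sim_class:
  assumes "\<And>a b c d. m (h b c d) a = h (m b a) (m c a) (m d a)"
    and "right_closed h m P"
  shows "right_closed h m (sim_class h P a)"
  using assms left_closed_sim_class[where m = "\<lambda>x y. m y x"]
  by (simp add: right_closed_eq_left_closed_flip)

end

end

lemma paragon_closed_sub:
  assumes "heap h" and "paragon h m P"
  shows "closed_sub h m P"
proof -
  obtain e where "sub_heap h P" "e \<in> P"
    using assms(2) by (auto simp: paragon_def normal_sub_heap_def)
  moreover have "closed_sub h m (sim_class h P e)"
    using assms(2) by (simp add: paragon_def)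
  ultimately show ?thesis
    using sim_class_base[OF assms(1)] by simp
qed

lemma paragon_iff_left_closed_and_classes_right_closed:
  assumes "near_truss h m" and "normal_sub_heap h P"
  shows "paragon h m P \<longleftrightarrow> left_closed h m P \<and> (\<forall>a. right_closed h m (sim_class h P a))"
proof -
  have heap: "heap h" and left_distrib: "\<And>a b c d. m a (h b c d) = h (m a b) (m a c) (m a d)"
    using assms(1) by (simp_all add: near_truss_def pre_truss_def)
  obtain e where P: "sub_heap h P" "e \<in> P"
    using assms(2) by (auto simp: normal_sub_heap_def)
  show ?thesis
  proof
    assume paragon: "paragon h m P"
    have "closed_sub h m P"
      using heap paragon by (rule paragon_closed_sub)
    with paragon show "left_closed h m P \<and> (\<forall>a. right_closed h m (sim_class h P a))"
      by (simp add: paragon_def closed_sub_def)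
  next
    assume closed: "left_closed h m P \<and> (\<forall>a. right_closed h m (sim_class h P a))"
    have "left_closed h m (sim_class h P a)" for a
      (* Instantiating m before OF matters: higher-order unification against the
         \<And>-premise alone yields a degenerate instance on which simp diverges. *)
      using closed left_closed_sim_class[where m = m, OF heap P left_distrib] by simp
    then show "paragon h m P"
      using assms(2) sub_heap_sim_class[OF heap P] closed
      by (simp add: paragon_def closed_sub_def)
  qed
qed

lemma paragon_iff_closed_sub_if_skew_truss:
  assumes "skew_truss h m" and "normal_sub_heap h P"
  shows "paragon h m P \<longleftrightarrow> closed_sub h m P"
proof -
  have near: "near_truss h m" and heap: "heap h"
    and right_distrib: "\<And>a b c d. m (h b c d) a = h (m b a) (m c a) (m d a)"
    using assms(1) by (simp_all add: skew_truss_def near_truss_def pre_truss_def)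
  obtain e where P: "sub_heap h P" "e \<in> P"
    using assms(2) by (auto simp: normal_sub_heap_def)
  show ?thesis
  proof
    assume "paragon h m P"
    with heap show "closed_sub h m P"
      by (rule paragon_closed_sub)
  next
    assume "closed_sub h m P"
    then show "paragon h m P"
      unfolding paragon_iff_left_closed_and_classes_right_closed[OF near assms(2)]
      using right_closed_sim_class[where m = m, OF heap P right_distrib] by (simp add: closed_sub_def)
  qed
qed

theorem corollary3p12:
  fixes h :: "'a \<Rightarrow> 'a \<Rightarrow> 'a \<Rightarrow> 'a" and m :: "'a \<Rightarrow> 'a \<Rightarrow> 'a" and P :: "'a set"
  assumes "near_truss h m" and "normal_sub_heap h P"
  shows "(paragon h m P \<longleftrightarrow>
            left_closed h m P \<and> (\<forall>a. right_closed h m (sim_class h P a))) \<and>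
         (skew_truss h m \<longrightarrow> (paragon h m P \<longleftrightarrow> closed_sub h m P))"
  using paragon_iff_left_closed_and_classes_right_closed[OF assms]
    paragon_iff_closed_sub_if_skew_truss[OF _ assms(2)]
  by blast

end
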